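(* Let $\delta,\varepsilon,\gamma\in\mathbb{R}$ with $\varepsilon\neq 0$, let $\{\alpha_j\}_{j\ge1}$, $\{\beta_j\}_{j\ge1}$ be bounded real sequences with all terms nonzero, and let $\{\lambda_j\}_{j\ge1}$ be a real sequence with $\lambda_j\to\infty$. Consider real sequences $\mathbf c=(c_1,c_2,\dots)$ satisfying $$(\delta-\lambda_1-\gamma\varepsilon)c_1+\alpha_1\varepsilon c_2=0,\qquad \beta_{j-1}\varepsilon c_{j-1}+(\delta-\lambda_j)c_j+\alpha_j\varepsilon c_{j+1}=0\quad (j\ge 2).$$ Then: (a) the set of such sequences is a one-dimensional real vector space, i.e. a solution is unique up to multiplication by a constant (and is determined by $c_1$); (b) if $\mathbf c$ is a nontrivial solution and $\mathbf c\in\ell^2$, then $\dfrac{c_j}{c_{j-1}}\sim\dfrac{\beta_{j-1}\varepsilon}{\lambda_j-\delta}$; if $\mathbf c$ is a nontrivial solution and $\mathbf c\notin\ell^2$, then $\dfrac{c_j}{c_{j-1}}\sim\dfrac{\lambda_{j-1}-\delta}{\alpha_{j-1}\varepsilon}$.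
   Context: $\ell^2$ denotes the space of real sequences $(x_1,x_2,\dots)$ with $\sum_j|x_j|^2<\infty$. The notation $a_j\sim b_j$ means $a_j/b_j\to1$ as $j\to\infty$. The system above is equivalent to the infinite matrix equation $T\mathbf c=0$ where $T$ is tridiagonal with diagonal $(\delta-\lambda_1-\gamma\varepsilon,\delta-\lambda_2,\delta-\lambda_3,\dots)$, superdiagonal $(\alpha_1\varepsilon,\alpha_2\varepsilon,\dots)$ and subdiagonal $(\beta_1\varepsilon,\beta_2\varepsilon,\dots)$. *)

theory Defs
  imports "HOL-Analysis.Analysis" "HOL-Library.Landau_Symbols"
begin

text \<open>Zero-based indexing: the paper's c_j, alpha_j, beta_j, lambda_j (j >= 1)
  are represented as c (j-1), a (j-1), b (j-1), lam (j-1).\<close>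

definition tri_solution ::
  "real \<Rightarrow> real \<Rightarrow> real \<Rightarrow> (nat \<Rightarrow> real) \<Rightarrow> (nat \<Rightarrow> real) \<Rightarrow> (nat \<Rightarrow> real) \<Rightarrow> (nat \<Rightarrow> real) \<Rightarrow> bool"
where
  "tri_solution \<delta> \<epsilon> \<gamma> a b lam c \<longleftrightarrow>
     (\<delta> - lam 0 - \<gamma> * \<epsilon>) * c 0 + a 0 * \<epsilon> * c 1 = 0 \<and>
     (\<forall>n\<ge>1. b (n - 1) * \<epsilon> * c (n - 1) + (\<delta> - lam n) * c n + a n * \<epsilon> * c (Suc n) = 0)"

end

theory Submission
  imports Defs
begin

(*
  Scaled by \<epsilon>, the equations for j \<ge> 2 form the three-term recurrence
  B n c n + A (n+1) c (n+2) = mu (n+1) c (n+1) with A = \<alpha> \<epsilon>, B = \<beta> \<epsilon>, mu = \<lambda> - \<delta>.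
  As A never vanishes, c is determined by c 0 and c 1, and the first equation fixes c 1
  as a multiple of c 0; this gives (a).

  For (b), let M bound |A| and |B| and take n so large that mu \<ge> 4 M. The triangle inequality
  in the recurrence then leaves only two possibilities: once |c| increases, it grows at least
  by the factor 3 at every later step; otherwise |c| shrinks at least by the factor 3 at every
  step. In the first case c is not in l2 and the term B n c n is negligible in the recurrence,
  giving c (n+1) / c n ~ mu n / A n; in the second case c is in l2 and A (n+1) c (n+2) is
  negligible, giving c (n+1) / c n ~ B n / mu (n+1).
*)

definition three_term_rec ::
  "(nat \<Rightarrow> real) \<Rightarrow> (nat \<Rightarrow> real) \<Rightarrow> (nat \<Rightarrow> real) \<Rightarrow> (nat \<Rightarrow> real) \<Rightarrow> bool"
where
  "three_term_rec A B mu c \<longleftrightarrow>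
     (\<forall>n. B n * c n + A (Suc n) * c (Suc (Suc n)) = mu (Suc n) * c (Suc n))"

lemma tri_solution_iff_three_term_rec:
  "tri_solution \<delta> \<epsilon> \<gamma> a b lam c \<longleftrightarrow>
     a 0 * \<epsilon> * c 1 = (lam 0 - \<delta> + \<gamma> * \<epsilon>) * c 0 \<and>
     three_term_rec (\<lambda>n. a n * \<epsilon>) (\<lambda>n. b n * \<epsilon>) (\<lambda>n. lam n - \<delta>) c"
proof -
  have "(\<forall>n\<ge>1. b (n - 1) * \<epsilon> * c (n - 1) + (\<delta> - lam n) * c n + a n * \<epsilon> * c (Suc n) = 0)
    \<longleftrightarrow> (\<forall>n. b n * \<epsilon> * c n + (\<delta> - lam (Suc n)) * c (Suc n) + a (Suc n) * \<epsilon> * c (Suc (Suc n)) = 0)"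
    by (metis One_nat_def diff_Suc_1 not0_implies_Suc not_one_le_zero le_add1 plus_1_eq_Suc)
  then show ?thesis
    unfolding tri_solution_def three_term_rec_def by (simp add: algebra_simps)
qed

lemma three_term_rec_scale:
  "three_term_rec A B mu c \<Longrightarrow> three_term_rec A B mu (\<lambda>n. t * c n)"
  unfolding three_term_rec_def by (metis (no_types, lifting) distrib_left mult.left_commute)

lemma three_term_rec_eqI:
  assumes "three_term_rec A B mu c" "three_term_rec A B mu d" "\<forall>n. A n \<noteq> 0"
    and "c 0 = d 0" "c 1 = d 1"
  shows "c = d"
proof -
  have "c n = d n \<and> c (Suc n) = d (Suc n)" for n
  proof (induction n)
    case (Suc n)
    have "A (Suc n) * c (Suc (Suc n)) = A (Suc n) * d (Suc (Suc n))"
      using assms(1,2) Suc unfolding three_term_rec_def by (metis add_left_cancel)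
    with Suc assms(3) show ?case by simp
  qed (use assms in simp)
  then show ?thesis by auto
qed

fun three_term_seq ::
  "(nat \<Rightarrow> real) \<Rightarrow> (nat \<Rightarrow> real) \<Rightarrow> (nat \<Rightarrow> real) \<Rightarrow> real \<Rightarrow> real \<Rightarrow> nat \<Rightarrow> real"
where
  "three_term_seq A B mu x y 0 = x"
| "three_term_seq A B mu x y (Suc 0) = y"
| "three_term_seq A B mu x y (Suc (Suc n)) =
     (mu (Suc n) * three_term_seq A B mu x y (Suc n) - B n * three_term_seq A B mu x y n) / A (Suc n)"

lemma three_term_rec_three_term_seq:
  "\<forall>n. A n \<noteq> 0 \<Longrightarrow> three_term_rec A B mu (three_term_seq A B mu x y)"
  unfolding three_term_rec_def by simp

lemma three_term_rec_zero_pair: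
  assumes rec: "three_term_rec A B mu c" and "\<forall>n. A n \<noteq> 0" "\<forall>n. B n \<noteq> 0"
    and "c k = 0" "c (Suc k) = 0"
  shows "c = (\<lambda>_. 0)"
proof -
  have "c k = 0 \<Longrightarrow> c (Suc k) = 0 \<Longrightarrow> c 0 = 0 \<and> c 1 = 0" for k
  proof (induction k)
    case (Suc k)
    then have "B k * c k = 0"
      using rec unfolding three_term_rec_def by (metis add.right_neutral mult_zero_right)
    with Suc \<open>\<forall>n. B n \<noteq> 0\<close> show ?case by simp
  qed simp
  with assms have "c 0 = 0" "c 1 = 0" by auto
  moreover have "three_term_rec A B mu (\<lambda>_. 0)"
    unfolding three_term_rec_def by simp
  ultimately show ?thesis
    using three_term_rec_eqI[OF rec] assms(2) by simp
qed

lemma three_term_rec_abs_le: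
  assumes "three_term_rec A B mu c" "0 \<le> mu (Suc k)"
  shows "mu (Suc k) * \<bar>c (Suc k)\<bar> \<le> \<bar>B k\<bar> * \<bar>c k\<bar> + \<bar>A (Suc k)\<bar> * \<bar>c (Suc (Suc k))\<bar>"
proof -
  have "mu (Suc k) * \<bar>c (Suc k)\<bar> = \<bar>B k * c k + A (Suc k) * c (Suc (Suc k))\<bar>"
    using assms unfolding three_term_rec_def by (metis abs_mult abs_of_nonneg)
  also have "\<dots> \<le> \<bar>B k\<bar> * \<bar>c k\<bar> + \<bar>A (Suc k)\<bar> * \<bar>c (Suc (Suc k))\<bar>"
    by (metis abs_mult abs_triangle_ineq)
  finally show ?thesis .
qed

lemma tendsto_const_divide_at_top:
  fixes f :: "'a \<Rightarrow> real"
  assumes "filterlim f at_top F"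
  shows "((\<lambda>x. C / (f x - D)) \<longlongrightarrow> 0) F"
proof -
  have "filterlim (\<lambda>x. - D + f x) at_top F"
    by (rule filterlim_tendsto_add_at_top[OF tendsto_const assms])
  then have "filterlim (\<lambda>x. f x - D) at_infinity F"
    by (intro filterlim_at_top_imp_at_infinity) simp
  then show ?thesis by (rule tendsto_divide_0[OF tendsto_const])
qed

lemma asymp_equiv_by_relative_error:
  fixes f g h :: "'a \<Rightarrow> real"
  assumes "eventually (\<lambda>x. \<bar>f x / g x - 1\<bar> \<le> h x) F" "(h \<longlongrightarrow> 0) F"
  shows "f \<sim>[F] g"
proof (rule asymp_equivI')
  have "((\<lambda>x. f x / g x - 1) \<longlongrightarrow> 0) F"
    by (rule Lim_null_comparison[OF _ assms(2)]) (use assms(1) in simp)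
  then show "((\<lambda>x. f x / g x) \<longlongrightarrow> 1) F" by (simp add: LIM_zero_iff)
qed

lemma not_summable_power2_if_abs_incseq_from:
  fixes c :: "nat \<Rightarrow> real"
  assumes "c m \<noteq> 0" "\<And>k. k \<ge> m \<Longrightarrow> \<bar>c k\<bar> \<le> \<bar>c (Suc k)\<bar>"
  shows "\<not> summable (\<lambda>n. (c n)\<^sup>2)"
proof
  assume "summable (\<lambda>n. (c n)\<^sup>2)"
  then have "(\<lambda>n. (c n)\<^sup>2) \<longlonglongrightarrow> 0" by (rule summable_LIMSEQ_zero)
  then have "eventually (\<lambda>n. (c n)\<^sup>2 < (c m)\<^sup>2) sequentially"
    by (rule order_tendstoD(2)) (use assms(1) in simp)
  then obtain K where K: "\<And>n. n \<ge> K \<Longrightarrow> (c n)\<^sup>2 < (c m)\<^sup>2"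
    by (auto simp: eventually_sequentially)
  have "\<bar>c m\<bar> \<le> \<bar>c n\<bar>" if "n \<ge> m" for n
    using that by (induction n rule: dec_induct) (simp, metis assms(2) order.trans)
  from this[of "max K m"] K[of "max K m"] show False by (simp add: abs_le_square_iff)
qed

lemma three_term_rec_growing:
  assumes rec: "three_term_rec A B mu c"
    and M: "M > 0" "\<And>n. \<bar>A n\<bar> \<le> M" "\<And>n. \<bar>B n\<bar> \<le> M"
    and N: "\<And>n. N \<le> n \<Longrightarrow> 4 * M \<le> mu n"
    and mu: "filterlim mu at_top sequentially"
    and m: "N \<le> m" "\<bar>c m\<bar> < \<bar>c (Suc m)\<bar>"
  shows "\<not> summable (\<lambda>n. (c n)\<^sup>2) \<and> (\<lambda>n. c (Suc n) / c n) \<sim>[sequentially] (\<lambda>n. mu n / A n)"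
proof -
  have step: "\<bar>c (Suc k)\<bar> < \<bar>c (Suc (Suc k))\<bar>" if k: "N \<le> k" "\<bar>c k\<bar> < \<bar>c (Suc k)\<bar>" for k
  proof -
    have "\<bar>B k\<bar> * \<bar>c k\<bar> \<le> M * \<bar>c (Suc k)\<bar>"
      using M(3)[of k] k(2) M(1) by (intro mult_mono) auto
    moreover have "\<bar>A (Suc k)\<bar> * \<bar>c (Suc (Suc k))\<bar> \<le> M * \<bar>c (Suc (Suc k))\<bar>"
      using M(2) by (intro mult_right_mono) auto
    moreover have "4 * M * \<bar>c (Suc k)\<bar> \<le> mu (Suc k) * \<bar>c (Suc k)\<bar>"
      using N[of "Suc k"] k(1) by (intro mult_right_mono) auto
    moreover have "mu (Suc k) * \<bar>c (Suc k)\<bar> \<le> \<bar>B k\<bar> * \<bar>c k\<bar> + \<bar>A (Suc k)\<bar> * \<bar>c (Suc (Suc k))\<bar>"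
      using three_term_rec_abs_le[OF rec] N[of "Suc k"] k(1) M(1) by simp
    ultimately have "M * (3 * \<bar>c (Suc k)\<bar>) \<le> M * \<bar>c (Suc (Suc k))\<bar>"
      by linarith
    then have "3 * \<bar>c (Suc k)\<bar> \<le> \<bar>c (Suc (Suc k))\<bar>"
      using M(1) by simp
    with k(2) show ?thesis by linarith
  qed
  have incr: "\<bar>c k\<bar> < \<bar>c (Suc k)\<bar>" if "m \<le> k" for k
    using that by (induction k rule: dec_induct) (use m step in auto)
  have "\<not> summable (\<lambda>n. (c n)\<^sup>2)"
  proof (rule not_summable_power2_if_abs_incseq_from)
    show "c (Suc m) \<noteq> 0" using m(2) by auto
    show "\<bar>c k\<bar> \<le> \<bar>c (Suc k)\<bar>" if "Suc m \<le> k" for k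
      using incr[of k] that by simp
  qed
  moreover have "(\<lambda>n. c (Suc n) / c n) \<sim>[sequentially] (\<lambda>n. mu n / A n)"
  proof (rule asymp_equiv_by_relative_error)
    show "(\<lambda>n. M / mu n) \<longlonglongrightarrow> 0"
      using tendsto_const_divide_at_top[OF mu, of M 0] by simp
    have "\<bar>c (Suc (Suc n)) / c (Suc n) / (mu (Suc n) / A (Suc n)) - 1\<bar> \<le> M / mu (Suc n)"
      if n: "m \<le> n" for n
    proof -
      have mu_pos: "mu (Suc n) > 0" using N[of "Suc n"] n m(1) M(1) by simp
      have c_ne: "c (Suc n) \<noteq> 0" using incr[OF n] by auto
      have "B n * c n + A (Suc n) * c (Suc (Suc n)) = mu (Suc n) * c (Suc n)"
        using rec unfolding three_term_rec_def by blast
      then have "A (Suc n) * c (Suc (Suc n)) = mu (Suc n) * c (Suc n) - B n * c n"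
        by linarith
      moreover have "c (Suc (Suc n)) / c (Suc n) / (mu (Suc n) / A (Suc n))
          = A (Suc n) * c (Suc (Suc n)) / (mu (Suc n) * c (Suc n))"
        by (simp add: mult.commute)
      ultimately have "c (Suc (Suc n)) / c (Suc n) / (mu (Suc n) / A (Suc n)) - 1
          = - (B n * c n) / (mu (Suc n) * c (Suc n))"
        using mu_pos c_ne by (simp add: diff_divide_distrib)
      also have "\<bar>\<dots>\<bar> = \<bar>B n\<bar> * \<bar>c n\<bar> / (mu (Suc n) * \<bar>c (Suc n)\<bar>)"
        using mu_pos by (simp add: abs_mult)
      also have "\<dots> \<le> M * \<bar>c (Suc n)\<bar> / (mu (Suc n) * \<bar>c (Suc n)\<bar>)"
        using M(3)[of n] incr[OF n] mu_pos M(1)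
        by (intro divide_right_mono mult_mono) auto
      also have "\<dots> = M / mu (Suc n)" using c_ne by simp
      finally show ?thesis .
    qed
    then have "eventually (\<lambda>n. \<bar>c (Suc (Suc n)) / c (Suc n) / (mu (Suc n) / A (Suc n)) - 1\<bar>
        \<le> M / mu (Suc n)) sequentially"
      by (auto simp: eventually_sequentially)
    then show "eventually (\<lambda>n. \<bar>c (Suc n) / c n / (mu n / A n) - 1\<bar> \<le> M / mu n) sequentially"
      by (rule eventually_sequentially_Suc[THEN iffD1])
  qed
  ultimately show ?thesis ..
qed

lemma three_term_rec_decaying:
  assumes rec: "three_term_rec A B mu c" and A: "\<forall>n. A n \<noteq> 0" and B: "\<forall>n. B n \<noteq> 0"
    and M: "M > 0" "\<And>n. \<bar>A n\<bar> \<le> M" "\<And>n. \<bar>B n\<bar> \<le> M"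
    and N: "\<And>n. N \<le> n \<Longrightarrow> 4 * M \<le> mu n"
    and mu: "filterlim mu at_top sequentially"
    and dec: "\<And>k. N \<le> k \<Longrightarrow> \<bar>c (Suc k)\<bar> \<le> \<bar>c k\<bar>"
    and nz: "c \<noteq> (\<lambda>_. 0)"
  shows "summable (\<lambda>n. (c n)\<^sup>2) \<and> (\<lambda>n. c (Suc n) / c n) \<sim>[sequentially] (\<lambda>n. B n / mu (Suc n))"
proof -
  have lower: "(mu (Suc k) - M) * \<bar>c (Suc k)\<bar> \<le> \<bar>B k\<bar> * \<bar>c k\<bar>" if k: "N \<le> k" for k
  proof -
    have "\<bar>A (Suc k)\<bar> * \<bar>c (Suc (Suc k))\<bar> \<le> M * \<bar>c (Suc k)\<bar>"
      using M(2)[of "Suc k"] dec[of "Suc k"] k M(1) by (intro mult_mono) auto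
    moreover have "mu (Suc k) * \<bar>c (Suc k)\<bar> \<le> \<bar>B k\<bar> * \<bar>c k\<bar> + \<bar>A (Suc k)\<bar> * \<bar>c (Suc (Suc k))\<bar>"
      using three_term_rec_abs_le[OF rec] N[of "Suc k"] k M(1) by simp
    ultimately show ?thesis by (simp add: left_diff_distrib)
  qed
  have lower3: "3 * M * \<bar>c (Suc k)\<bar> \<le> \<bar>B k\<bar> * \<bar>c k\<bar>" if k: "N \<le> k" for k
  proof -
    have "3 * M * \<bar>c (Suc k)\<bar> \<le> (mu (Suc k) - M) * \<bar>c (Suc k)\<bar>"
      using N[of "Suc k"] k by (intro mult_right_mono) auto
    with lower[OF k] show ?thesis by linarith
  qed
  have upper: "\<bar>B k\<bar> * \<bar>c k\<bar> \<le> M * \<bar>c k\<bar>" for k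
    using M(3) by (intro mult_right_mono) auto
  have "summable (\<lambda>n. (c n)\<^sup>2)"
  proof (rule summable_ratio_test[where c = "1/9" and N = N])
    fix n assume n: "N \<le> n"
    have "M * (3 * \<bar>c (Suc n)\<bar>) \<le> M * \<bar>c n\<bar>"
      using lower3[OF n] upper[of n] by linarith
    then have "3 * \<bar>c (Suc n)\<bar> \<le> \<bar>c n\<bar>" using M(1) by simp
    then have "(3 * \<bar>c (Suc n)\<bar>)\<^sup>2 \<le> \<bar>c n\<bar>\<^sup>2" by (intro power_mono) auto
    then show "norm ((c (Suc n))\<^sup>2) \<le> 1/9 * norm ((c n)\<^sup>2)" by (simp add: power_mult_distrib)
  qed simp
  moreover have "(\<lambda>n. c (Suc n) / c n) \<sim>[sequentially] (\<lambda>n. B n / mu (Suc n))"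
  proof (rule asymp_equiv_by_relative_error)
    show "(\<lambda>n. M / 3 / (mu (Suc (Suc n)) - M)) \<longlonglongrightarrow> 0"
      by (intro LIMSEQ_Suc tendsto_const_divide_at_top[OF mu])
    have c_ne: "c k \<noteq> 0" if k: "N \<le> k" for k
    proof
      assume "c k = 0"
      with dec[OF k] have "c (Suc k) = 0" by simp
      with \<open>c k = 0\<close> have "c = (\<lambda>_. 0)" by (rule three_term_rec_zero_pair[OF rec A B])
      with nz show False ..
    qed
    have "\<bar>c (Suc n) / c n / (B n / mu (Suc n)) - 1\<bar> \<le> M / 3 / (mu (Suc (Suc n)) - M)"
      if n: "N \<le> n" for n
    proof -
      define X where "X = \<bar>A (Suc n)\<bar> * \<bar>c (Suc (Suc n))\<bar>"
      define Y where "Y = \<bar>B n\<bar> * \<bar>c n\<bar>"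
      define D where "D = mu (Suc (Suc n)) - M"
      have mu_pos: "mu (Suc n) > 0" using N[of "Suc n"] n M(1) by simp
      have D_pos: "D \<ge> 3 * M" using N[of "Suc (Suc n)"] n unfolding D_def by simp
      have Y_pos: "Y > 0" using B c_ne[OF n] unfolding Y_def by simp
      have "B n * c n + A (Suc n) * c (Suc (Suc n)) = mu (Suc n) * c (Suc n)"
        using rec unfolding three_term_rec_def by blast
      moreover have "c (Suc n) / c n / (B n / mu (Suc n)) = mu (Suc n) * c (Suc n) / (B n * c n)"
        by (simp add: mult.commute)
      ultimately have "c (Suc n) / c n / (B n / mu (Suc n)) - 1 = A (Suc n) * c (Suc (Suc n)) / (B n * c n)"
        using B c_ne[OF n] by (simp add: field_simps)
      then have err: "\<bar>c (Suc n) / c n / (B n / mu (Suc n)) - 1\<bar> = X / Y"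
        unfolding X_def Y_def by (simp add: abs_mult)
      have "X * D \<le> M * \<bar>c (Suc (Suc n))\<bar> * D"
        using M(2) D_pos M(1) unfolding X_def by (intro mult_right_mono) auto
      also have "\<dots> = M * (D * \<bar>c (Suc (Suc n))\<bar>)" by (simp add: mult_ac)
      also have "\<dots> \<le> M * (M * \<bar>c (Suc n)\<bar>)"
        unfolding D_def using lower[of "Suc n"] upper[of "Suc n"] n M(1)
        by (intro mult_left_mono) auto
      also have "\<dots> \<le> M * Y / 3"
        using lower3[OF n] M(1) unfolding Y_def by simp
      finally have "X * D \<le> M * Y / 3" .
      with Y_pos D_pos M(1) have "X / Y \<le> M / 3 / D"
        by (simp add: field_simps)
      with err show ?thesis unfolding D_def by simp
    qed
    then show "eventually (\<lambda>n. \<bar>c (Suc n) / c n / (B n / mu (Suc n)) - 1\<bar>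
        \<le> M / 3 / (mu (Suc (Suc n)) - M)) sequentially"
      by (auto simp: eventually_sequentially)
  qed
  ultimately show ?thesis ..
qed

lemma three_term_rec_dichotomy:
  assumes rec: "three_term_rec A B mu c" and A: "\<forall>n. A n \<noteq> 0" and B: "\<forall>n. B n \<noteq> 0"
    and "Bseq A" "Bseq B" and mu: "filterlim mu at_top sequentially"
    and nz: "c \<noteq> (\<lambda>_. 0)"
  shows "(summable (\<lambda>n. (c n)\<^sup>2) \<and> (\<lambda>n. c (Suc n) / c n) \<sim>[sequentially] (\<lambda>n. B n / mu (Suc n)))
       \<or> (\<not> summable (\<lambda>n. (c n)\<^sup>2) \<and> (\<lambda>n. c (Suc n) / c n) \<sim>[sequentially] (\<lambda>n. mu n / A n))"
proof -
  obtain Ka where Ka: "Ka > 0" "\<forall>n. norm (A n) \<le> Ka" using \<open>Bseq A\<close> by (rule BseqE)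
  obtain Kb where Kb: "Kb > 0" "\<forall>n. norm (B n) \<le> Kb" using \<open>Bseq B\<close> by (rule BseqE)
  define M where "M = max Ka Kb"
  have M: "M > 0" "\<And>n. \<bar>A n\<bar> \<le> M" "\<And>n. \<bar>B n\<bar> \<le> M"
    using Ka Kb unfolding M_def by (auto intro: max.coboundedI1 max.coboundedI2)
  have "eventually (\<lambda>n. 4 * M \<le> mu n) sequentially"
    using mu unfolding filterlim_at_top by blast
  then obtain N where N: "\<And>n. N \<le> n \<Longrightarrow> 4 * M \<le> mu n"
    by (auto simp: eventually_sequentially)
  show ?thesis
  proof (cases "\<exists>m\<ge>N. \<bar>c m\<bar> < \<bar>c (Suc m)\<bar>")
    case True
    then obtain m where "N \<le> m" "\<bar>c m\<bar> < \<bar>c (Suc m)\<bar>" by blast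
    from three_term_rec_growing[OF rec M N mu this] show ?thesis ..
  next
    case False
    then have "\<And>k. N \<le> k \<Longrightarrow> \<bar>c (Suc k)\<bar> \<le> \<bar>c k\<bar>" by (meson not_less)
    from three_term_rec_decaying[OF rec A B M N mu this nz] show ?thesis ..
  qed
qed

lemma tri_solution_scale:
  assumes "tri_solution \<delta> \<epsilon> \<gamma> a b lam c"
  shows "tri_solution \<delta> \<epsilon> \<gamma> a b lam (\<lambda>n. t * c n)"
  using assms three_term_rec_scale unfolding tri_solution_iff_three_term_rec
  by (metis mult.left_commute)

lemma tri_solution_exists:
  assumes "\<epsilon> \<noteq> 0" "\<forall>n. a n \<noteq> 0"
  shows "\<exists>v. tri_solution \<delta> \<epsilon> \<gamma> a b lam v \<and> v 0 = 1"
proof (intro exI conjI)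
  define v where "v = three_term_seq (\<lambda>n. a n * \<epsilon>) (\<lambda>n. b n * \<epsilon>) (\<lambda>n. lam n - \<delta>)
    1 ((lam 0 - \<delta> + \<gamma> * \<epsilon>) / (a 0 * \<epsilon>))"
  show "tri_solution \<delta> \<epsilon> \<gamma> a b lam v"
    unfolding tri_solution_iff_three_term_rec v_def
    using assms three_term_rec_three_term_seq[where A = "\<lambda>n. a n * \<epsilon>"] by simp
  show "v 0 = 1" unfolding v_def by simp
qed

lemma tri_solution_eq_scaled:
  assumes "\<epsilon> \<noteq> 0" "\<forall>n. a n \<noteq> 0"
    and c: "tri_solution \<delta> \<epsilon> \<gamma> a b lam c" and v: "tri_solution \<delta> \<epsilon> \<gamma> a b lam v" "v 0 = 1"
  shows "c = (\<lambda>n. c 0 * v n)"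
proof (rule three_term_rec_eqI)
  show "three_term_rec (\<lambda>n. a n * \<epsilon>) (\<lambda>n. b n * \<epsilon>) (\<lambda>n. lam n - \<delta>) c"
    "three_term_rec (\<lambda>n. a n * \<epsilon>) (\<lambda>n. b n * \<epsilon>) (\<lambda>n. lam n - \<delta>) (\<lambda>n. c 0 * v n)"
    using c v three_term_rec_scale unfolding tri_solution_iff_three_term_rec by blast+
  show "\<forall>n. a n * \<epsilon> \<noteq> 0" using assms(1,2) by simp
  show "c 0 = c 0 * v 0" using v(2) by simp
  have "a 0 * \<epsilon> * c 1 = a 0 * \<epsilon> * (c 0 * v 1)"
    using c v unfolding tri_solution_iff_three_term_rec by (metis mult.left_commute mult.right_neutral)
  then show "c 1 = c 0 * v 1" using assms(1,2) by simp
qed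

lemma tri_solution_dichotomy:
  assumes "\<epsilon> \<noteq> 0" "Bseq a" "Bseq b" "\<forall>n. a n \<noteq> 0" "\<forall>n. b n \<noteq> 0"
    and "filterlim lam at_top sequentially"
    and c: "tri_solution \<delta> \<epsilon> \<gamma> a b lam c" "c \<noteq> (\<lambda>_. 0)"
  shows "(summable (\<lambda>n. (c n)\<^sup>2) \<and>
          (\<lambda>n. c (Suc n) / c n) \<sim>[sequentially] (\<lambda>n. b n * \<epsilon> / (lam (Suc n) - \<delta>)))
       \<or> (\<not> summable (\<lambda>n. (c n)\<^sup>2) \<and>
          (\<lambda>n. c (Suc n) / c n) \<sim>[sequentially] (\<lambda>n. (lam n - \<delta>) / (a n * \<epsilon>)))"
proof (rule three_term_rec_dichotomy)
  show "three_term_rec (\<lambda>n. a n * \<epsilon>) (\<lambda>n. b n * \<epsilon>) (\<lambda>n. lam n - \<delta>) c"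
    using c(1) unfolding tri_solution_iff_three_term_rec by blast
  show "\<forall>n. a n * \<epsilon> \<noteq> 0" "\<forall>n. b n * \<epsilon> \<noteq> 0"
    using assms(1,4,5) by simp_all
  show "Bseq (\<lambda>n. a n * \<epsilon>)" "Bseq (\<lambda>n. b n * \<epsilon>)"
    using assms(1-3) Bseq_cmult_iff[of \<epsilon>] by (simp_all add: mult.commute)
  show "filterlim (\<lambda>n. lam n - \<delta>) at_top sequentially"
    using filterlim_tendsto_add_at_top[OF tendsto_const assms(6), of "- \<delta>"] by simp
qed fact

theorem corollary3p3:
  fixes \<delta> \<epsilon> \<gamma> :: real and a b lam :: "nat \<Rightarrow> real"
  assumes "\<epsilon> \<noteq> 0"
    and "Bseq a" and "Bseq b"
    and "\<forall>n. a n \<noteq> 0" and "\<forall>n. b n \<noteq> 0"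
    and "filterlim lam at_top sequentially"
  shows "(\<exists>v. tri_solution \<delta> \<epsilon> \<gamma> a b lam v \<and> v \<noteq> (\<lambda>_. 0) \<and>
            {c. tri_solution \<delta> \<epsilon> \<gamma> a b lam c} = {(\<lambda>n. t * v n) | t. True})
       \<and> (\<forall>c d. tri_solution \<delta> \<epsilon> \<gamma> a b lam c \<longrightarrow> tri_solution \<delta> \<epsilon> \<gamma> a b lam d
              \<longrightarrow> c 0 = d 0 \<longrightarrow> c = d)
       \<and> (\<forall>c. tri_solution \<delta> \<epsilon> \<gamma> a b lam c \<and> c \<noteq> (\<lambda>_. 0) \<and> summable (\<lambda>n. (c n)\<^sup>2)
              \<longrightarrow> (\<lambda>n. c (Suc n) / c n) \<sim>[sequentially] (\<lambda>n. b n * \<epsilon> / (lam (Suc n) - \<delta>)))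
       \<and> (\<forall>c. tri_solution \<delta> \<epsilon> \<gamma> a b lam c \<and> c \<noteq> (\<lambda>_. 0) \<and> \<not> summable (\<lambda>n. (c n)\<^sup>2)
              \<longrightarrow> (\<lambda>n. c (Suc n) / c n) \<sim>[sequentially] (\<lambda>n. (lam n - \<delta>) / (a n * \<epsilon>)))"
proof -
  note \<epsilon> = assms(1) and a = assms(4)
  obtain v where v: "tri_solution \<delta> \<epsilon> \<gamma> a b lam v" "v 0 = 1"
    using tri_solution_exists[OF \<epsilon> a] by blast
  have scaled: "c = (\<lambda>n. c 0 * v n)" if "tri_solution \<delta> \<epsilon> \<gamma> a b lam c" for c
    using tri_solution_eq_scaled[OF \<epsilon> a that v] .
  have "{c. tri_solution \<delta> \<epsilon> \<gamma> a b lam c} = {(\<lambda>n. t * v n) | t. True}"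
    using scaled tri_solution_scale[OF v(1)] by blast
  moreover have "v \<noteq> (\<lambda>_. 0)" using v(2) by force
  moreover have "c = d"
    if "tri_solution \<delta> \<epsilon> \<gamma> a b lam c" "tri_solution \<delta> \<epsilon> \<gamma> a b lam d" "c 0 = d 0" for c d
    using scaled[OF that(1)] scaled[OF that(2)] that(3) by simp
  moreover note tri_solution_dichotomy[OF assms]
  ultimately show ?thesis using v(1) by blast
qed

end
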